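(* Let $v$ be a relaxation enhancing flow on the closed subspace $\mathcal{Y}\subset L^2(\pi)$ (see context). Let $\rho_0$ be an initial probability density with $q_0=\rho_0/\pi$ satisfying $0<c_1\le q_0\le c_2<\infty$ and $q_0-1\in\mathcal{Y}$. Then for any given $B>0$ and $t>0$ there is $A_0$ such that whenever $A>A_0$, \[ H(t)\le H_0\exp(-Bt), \] where $H(t)=\int q(t)\log q(t)\,\pi\,dx$ and $H_0=H(0)$.
   Context: Let $\Omega=\mathbb{T}^d$ or $\mathbb{R}^d$, and let $U\in C^2(\Omega)$; if $\Omega=\mathbb{R}^d$ assume moreover $\lim_{|x|\to\infty}\big(\tfrac12|\nabla U(x)|^2-\Delta U(x)\big)=+\infty$. Let $\pi\propto e^{-U}$ be the corresponding probability density. A flow is a vector field $v$ on $\Omega$ with $\nabla\cdot(v e^{-U})=0$. For $A\ge0$ let $\mathcal{L}_A=\Delta-\nabla U\cdot\nabla-Av\cdot\nabla$ acting on $L^2(\pi)$. Let $\mathcal{X}=\{\phi\in L^2(\pi):\int\phi\,\pi\,dx=0\}$ and let $\mathcal{Y}\subset\mathcal{X}$ be a closed subspace (with the $L^2(\pi)$ norm) that is invariant under the semigroup $e^{t\mathcal{L}_A}$ for every $A\ge0$. The flow $v$ is called relaxation enhancing (on $\mathcal{Y}$) if for every $\tau>0$ and $\delta>0$ there exists $A(\tau,\delta)>0$ such that $\|e^{\tau\mathcal{L}_A}\|_{\mathcal{Y}\to\mathcal{Y}}<\delta$ for all $A\ge A(\tau,\delta)$. Let $\rho(t)$ be the law at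 time $t$ of $dX_t=Av(X_t)\,dt-\nabla U(X_t)\,dt+\sqrt2\,dW_t$ with $X_0\sim\rho_0$; then $q(t)=\rho(t)/\pi$ solves $\partial_t q=\mathcal{L}_A q$, $q(0)=q_0$, and $H(t)=\mathcal{H}(\rho(t)\mid\pi)=\int q\log q\,\pi\,dx$ is the relative entropy. *)

theory Defs
  imports "HOL-Analysis.Analysis"
begin

text \<open>Space dimension d = DIM('a); points of \<Omega> are elements of 'a :: euclidean_space.
  The flag tor selects \<Omega> = T^d (functions are Z^d-periodic on R^d, integrals over the
  unit cube) or \<Omega> = R^d (integrals over all of R^d).\<close>

definition periodic :: "('a::euclidean_space \<Rightarrow> 'b) \<Rightarrow> bool" where
  "periodic f \<longleftrightarrow> (\<forall>x. \<forall>i\<in>Basis. f (x + i) = f x)"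

definition omega :: "bool \<Rightarrow> 'a::euclidean_space set" where
  "omega tor = (if tor then cbox 0 One else UNIV)"

definition pderiv :: "('a::euclidean_space \<Rightarrow> real) \<Rightarrow> 'a \<Rightarrow> 'a \<Rightarrow> real" where
  "pderiv f i x = frechet_derivative f (at x) i"

definition grad :: "('a::euclidean_space \<Rightarrow> real) \<Rightarrow> 'a \<Rightarrow> 'a" where
  "grad f x = (\<Sum>i\<in>Basis. pderiv f i x *\<^sub>R i)"

definition lap :: "('a::euclidean_space \<Rightarrow> real) \<Rightarrow> 'a \<Rightarrow> real" where
  "lap f x = (\<Sum>i\<in>Basis. pderiv (\<lambda>y. pderiv f i y) i x)"

definition divg :: "('a::euclidean_space \<Rightarrow> 'a) \<Rightarrow> 'a \<Rightarrow> real" where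
  "divg F x = (\<Sum>i\<in>Basis. pderiv (\<lambda>y. F y \<bullet> i) i x)"

definition C2 :: "('a::euclidean_space \<Rightarrow> real) \<Rightarrow> bool" where
  "C2 f \<longleftrightarrow> (\<forall>x. f differentiable (at x))
     \<and> (\<forall>i\<in>Basis. \<forall>x. (\<lambda>y. pderiv f i y) differentiable (at x))
     \<and> (\<forall>i\<in>Basis. \<forall>j\<in>Basis. continuous_on UNIV (\<lambda>x. pderiv (\<lambda>y. pderiv f i y) j x))"

definition C1_field :: "('a::euclidean_space \<Rightarrow> 'a) \<Rightarrow> bool" where
  "C1_field F \<longleftrightarrow> (\<forall>x. F differentiable (at x))
     \<and> (\<forall>i\<in>Basis. \<forall>j\<in>Basis. continuous_on UNIV (\<lambda>x. pderiv (\<lambda>y. F y \<bullet> i) j x))"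

definition Zc :: "bool \<Rightarrow> ('a::euclidean_space \<Rightarrow> real) \<Rightarrow> real" where
  "Zc tor U = (LINT y:omega tor|lborel. exp (- U y))"

definition piU :: "bool \<Rightarrow> ('a::euclidean_space \<Rightarrow> real) \<Rightarrow> 'a \<Rightarrow> real" where
  "piU tor U x = exp (- U x) / Zc tor U"

definition inL2 :: "bool \<Rightarrow> ('a::euclidean_space \<Rightarrow> real) \<Rightarrow> ('a \<Rightarrow> real) \<Rightarrow> bool" where
  "inL2 tor U \<phi> \<longleftrightarrow> \<phi> \<in> borel_measurable lborel \<and> (tor \<longrightarrow> periodic \<phi>)
     \<and> set_integrable lborel (omega tor) (\<lambda>x. (\<phi> x)\<^sup>2 * piU tor U x)"

definition L2norm :: "bool \<Rightarrow> ('a::euclidean_space \<Rightarrow> real) \<Rightarrow> ('a \<Rightarrow> real) \<Rightarrow> real" where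
  "L2norm tor U \<phi> = sqrt (LINT x:omega tor|lborel. (\<phi> x)\<^sup>2 * piU tor U x)"

definition Xsp :: "bool \<Rightarrow> ('a::euclidean_space \<Rightarrow> real) \<Rightarrow> ('a \<Rightarrow> real) set" where
  "Xsp tor U = {\<phi>. inL2 tor U \<phi> \<and> (LINT x:omega tor|lborel. \<phi> x * piU tor U x) = 0}"

definition closed_subspace :: "bool \<Rightarrow> ('a::euclidean_space \<Rightarrow> real) \<Rightarrow> ('a \<Rightarrow> real) set \<Rightarrow> bool" where
  "closed_subspace tor U Y \<longleftrightarrow> Y \<subseteq> Xsp tor U \<and> (\<lambda>x. 0) \<in> Y
     \<and> (\<forall>f\<in>Y. \<forall>g\<in>Y. (\<lambda>x. f x + g x) \<in> Y)
     \<and> (\<forall>f\<in>Y. \<forall>c::real. (\<lambda>x. c * f x) \<in> Y)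
     \<and> (\<forall>F \<phi>. (\<forall>n. F n \<in> Y) \<and> inL2 tor U \<phi>
          \<and> (\<lambda>n. L2norm tor U (\<lambda>x. F n x - \<phi> x)) \<longlonglongrightarrow> 0 \<longrightarrow> \<phi> \<in> Y)"

text \<open>Solutions of d/dt q = L_A q = lap q - grad U . grad q - A v . grad q:
  classical for t > 0, in L^2(pi) and continuous in L^2(pi) on [0,\<infinity>).
  The semigroup e^(t L_A) applied to q 0 is q t.\<close>

definition is_sol :: "bool \<Rightarrow> ('a::euclidean_space \<Rightarrow> real) \<Rightarrow> ('a \<Rightarrow> 'a) \<Rightarrow> real
    \<Rightarrow> (real \<Rightarrow> 'a \<Rightarrow> real) \<Rightarrow> bool" where
  "is_sol tor U v A q \<longleftrightarrow>
     (\<forall>t\<ge>0. inL2 tor U (q t))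
   \<and> (\<forall>t\<ge>0. ((\<lambda>s. L2norm tor U (\<lambda>x. q s x - q t x)) \<longlongrightarrow> 0) (at t within {0..}))
   \<and> (\<forall>t>0. C2 (q t))
   \<and> (\<forall>t>0. \<forall>x. ((\<lambda>s. q s x) has_real_derivative
          (lap (q t) x - grad U x \<bullet> grad (q t) x - A * (v x \<bullet> grad (q t) x))) (at t))"

text \<open>Relaxation enhancing: for all tau, delta > 0 there is A(tau,delta) > 0 such that
  the operator norm of e^(tau L_A) on Y is < delta for all A \<ge> A(tau,delta).\<close>

definition relax_enh :: "bool \<Rightarrow> ('a::euclidean_space \<Rightarrow> real) \<Rightarrow> ('a \<Rightarrow> 'a)
    \<Rightarrow> ('a \<Rightarrow> real) set \<Rightarrow> bool" where
  "relax_enh tor U v Y \<longleftrightarrow>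
     (\<forall>\<tau>>0. \<forall>\<delta>>0. \<exists>A1>0. \<forall>A\<ge>A1. \<exists>c<\<delta>. \<forall>q. is_sol tor U v A q \<and> q 0 \<in> Y
        \<longrightarrow> L2norm tor U (q \<tau>) \<le> c * L2norm tor U (q 0))"

definition entropy :: "bool \<Rightarrow> ('a::euclidean_space \<Rightarrow> real) \<Rightarrow> ('a \<Rightarrow> real) \<Rightarrow> real" where
  "entropy tor U q = (LINT x:omega tor|lborel. q x * ln (q x) * piU tor U x)"

end

theory Submission
  imports Defs
begin

(* For a density ratio q of mean one, the relative entropy is comparable to the squared
   L^2(pi) distance from equilibrium. The pointwise bounds
     (q - 1) + (q - 1)^2 / (2 max c2 1) <= q ln q <= (q - 1) + 2 (q - 1)^2
   integrate, the linear terms vanishing, to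
     ||q - 1||^2 / (2 max c2 1) <= H(q) <= 2 ||q - 1||^2,
   where only the lower bound needs c1 <= q <= c2 and it is used at time 0 only.
   Since q(t) - 1 solves the same equation and stays in Y, relaxation enhancement gives
   ||q(t) - 1|| <= delta ||q0 - 1|| for all large A, and delta^2 = exp(-B t) / (4 max c2 1)
   yields H(t) <= exp(-B t) H0. *)

(* q(t) is not known to be positive, and ln is even on the reals here (ln_minus),
   so this bound is proved for all real q. *)

lemma mult_ln_le_quadratic:
  fixes q :: real
  shows "q * ln q \<le> (q - 1) + 2 * (q - 1)\<^sup>2"
proof (cases q "0 :: real" rule: linorder_cases)
  case less
  have "ln (1 / - q) \<le> 1 / - q - 1"
    using less by (intro ln_le_minus_one) simp
  then have "1 + 1 / q \<le> ln q"
    using less by (simp add: ln_div ln_minus)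
  then have "q * ln q \<le> q * (1 + 1 / q)"
    using less by (simp add: mult_left_mono_neg)
  also have "\<dots> = q + 1"
    using less by (simp add: field_simps)
  also have "\<dots> \<le> (q - 1) + 2 * (q - 1)\<^sup>2"
    using less by (simp add: power2_eq_square algebra_simps)
  finally show ?thesis .
next
  case greater
  then have "q * ln q \<le> q * (q - 1)"
    by (simp add: ln_le_minus_one mult_left_mono)
  moreover have "0 \<le> (q - 1)\<^sup>2"
    by simp
  ultimately show ?thesis
    by (simp add: power2_eq_square algebra_simps)
qed simp

lemma mult_ln_ge_quadratic:
  fixes q K :: real
  assumes q: "0 < q" "q \<le> K" and K: "1 \<le> K"
  shows "(q - 1) + (q - 1)\<^sup>2 / (2 * K) \<le> q * ln q"
proof -
  define f where "f x = x * ln x - (x - 1) - (x - 1)\<^sup>2 / (2 * K)" for x :: real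
  have f': "(f has_real_derivative (ln x - (x - 1) / K)) (at x)" if "0 < x" for x
    unfolding f_def using that K
    by (auto intro!: derivative_eq_intros simp: field_simps power2_eq_square)
  have "f 1 \<le> f q"
  proof (cases "1 \<le> q")
    case True
    show ?thesis
    proof (rule DERIV_nonneg_imp_nondecreasing[OF True])
      fix x assume x: "1 \<le> x" "x \<le> q"
      have "(x - 1) / K \<le> (x - 1) / x"
        using x q K by (intro divide_left_mono) auto
      also have "\<dots> \<le> ln x"
        using ln_le_minus_one[of "1 / x"] x by (simp add: ln_div field_simps)
      finally have "(x - 1) / K \<le> ln x" .
      then show "\<exists>y. (f has_real_derivative y) (at x) \<and> 0 \<le> y"
        using f' x by (intro exI[of _ "ln x - (x - 1) / K"]) auto
    qed
  next
    case False
    show ?thesis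
    proof (rule DERIV_nonpos_imp_nonincreasing[of q 1 f, simplified])
      show "q \<le> 1" using False by simp
      fix x assume x: "q \<le> x" "x \<le> 1"
      have "ln x \<le> x - 1"
        using x q by (intro ln_le_minus_one) simp
      also have "x - 1 \<le> (x - 1) / K"
        using x K mult_nonneg_nonneg[of "K - 1" "1 - x"] by (simp add: field_simps algebra_simps)
      finally show "\<exists>y. (f has_real_derivative y) (at x) \<and> y \<le> 0"
        using f' x q by (intro exI[of _ "ln x - (x - 1) / K"]) auto
    qed
  qed
  then show ?thesis
    by (simp add: f_def)
qed

lemma set_integral_nonneg_real:
  fixes f :: "'a \<Rightarrow> real"
  assumes "\<And>x. x \<in> A \<Longrightarrow> 0 \<le> f x"
  shows "0 \<le> (LINT x:A|M. f x)"
  unfolding set_lebesgue_integral_def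
  using assms by (intro integral_nonneg_AE) (auto simp: indicator_def)

lemma set_integral_mult_ln_le_sq:
  fixes f p :: "'a \<Rightarrow> real"
  assumes p: "\<And>x. x \<in> \<Omega> \<Longrightarrow> 0 \<le> p x"
    and int1: "set_integrable M \<Omega> (\<lambda>x. (f x - 1) * p x)"
    and int2: "set_integrable M \<Omega> (\<lambda>x. (f x - 1)\<^sup>2 * p x)"
    and mean: "(LINT x:\<Omega>|M. (f x - 1) * p x) = 0"
  shows "(LINT x:\<Omega>|M. f x * ln (f x) * p x) \<le> 2 * (LINT x:\<Omega>|M. (f x - 1)\<^sup>2 * p x)"
proof (cases "set_integrable M \<Omega> (\<lambda>x. f x * ln (f x) * p x)")
  case True
  have "(LINT x:\<Omega>|M. f x * ln (f x) * p x)
      \<le> (LINT x:\<Omega>|M. (f x - 1) * p x + 2 * ((f x - 1)\<^sup>2 * p x))"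
  proof (rule set_integral_mono)
    fix x assume "x \<in> \<Omega>"
    then have "f x * ln (f x) * p x \<le> ((f x - 1) + 2 * (f x - 1)\<^sup>2) * p x"
      by (intro mult_right_mono mult_ln_le_quadratic p)
    then show "f x * ln (f x) * p x \<le> (f x - 1) * p x + 2 * ((f x - 1)\<^sup>2 * p x)"
      by (simp add: algebra_simps)
  qed (use True int1 int2 in auto)
  also have "\<dots> = 2 * (LINT x:\<Omega>|M. (f x - 1)\<^sup>2 * p x)"
    using int1 int2 mean by simp
  finally show ?thesis .
next
  case False
  \<comment> \<open>a non-integrable integrand has integral 0\<close>
  then have "(LINT x:\<Omega>|M. f x * ln (f x) * p x) = 0"
    by (simp add: set_integrable_def set_lebesgue_integral_def not_integrable_integral_eq)
  moreover have "0 \<le> (LINT x:\<Omega>|M. (f x - 1)\<^sup>2 * p x)"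
    using p by (intro set_integral_nonneg_real) simp
  ultimately show ?thesis
    by simp
qed

lemma set_integral_mult_ln_ge_sq:
  fixes f p :: "'a \<Rightarrow> real"
  assumes p: "\<And>x. x \<in> \<Omega> \<Longrightarrow> 0 \<le> p x"
    and f: "\<And>x. x \<in> \<Omega> \<Longrightarrow> 0 < f x \<and> f x \<le> K" and K: "1 \<le> K"
    and int1: "set_integrable M \<Omega> (\<lambda>x. (f x - 1) * p x)"
    and int2: "set_integrable M \<Omega> (\<lambda>x. (f x - 1)\<^sup>2 * p x)"
    and int3: "set_integrable M \<Omega> (\<lambda>x. f x * ln (f x) * p x)"
    and mean: "(LINT x:\<Omega>|M. (f x - 1) * p x) = 0"
  shows "(LINT x:\<Omega>|M. (f x - 1)\<^sup>2 * p x) / (2 * K) \<le> (LINT x:\<Omega>|M. f x * ln (f x) * p x)"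
proof -
  have "(LINT x:\<Omega>|M. (f x - 1)\<^sup>2 * p x) / (2 * K)
      = (LINT x:\<Omega>|M. (f x - 1) * p x + (f x - 1)\<^sup>2 * p x / (2 * K))"
    using int1 int2 mean by simp
  also have "\<dots> \<le> (LINT x:\<Omega>|M. f x * ln (f x) * p x)"
  proof (rule set_integral_mono)
    fix x assume x: "x \<in> \<Omega>"
    have "((f x - 1) + (f x - 1)\<^sup>2 / (2 * K)) * p x \<le> f x * ln (f x) * p x"
      using f[OF x] K p[OF x] by (intro mult_right_mono mult_ln_ge_quadratic) auto
    then show "(f x - 1) * p x + (f x - 1)\<^sup>2 * p x / (2 * K) \<le> f x * ln (f x) * p x"
      by (simp add: algebra_simps)
  qed (use int1 int2 int3 in auto)
  finally show ?thesis .
qed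

lemma frechet_derivative_diff_const:
  assumes "f differentiable (at x)"
  shows "frechet_derivative (\<lambda>y. f y - c) (at x) = frechet_derivative f (at x)"
proof -
  have "((\<lambda>y. f y - c) has_derivative (\<lambda>h. frechet_derivative f (at x) h - 0)) (at x)"
    using assms by (intro has_derivative_diff has_derivative_const) (simp add: frechet_derivative_works)
  then show ?thesis
    by (simp add: frechet_derivative_at[symmetric])
qed

lemma pderiv_diff_const:
  assumes "\<forall>x. f differentiable (at x)"
  shows "pderiv (\<lambda>y. f y - c) = pderiv f"
  using assms by (simp add: pderiv_def frechet_derivative_diff_const fun_eq_iff)

lemma
  assumes "C2 f"
  shows C2_diff_const: "C2 (\<lambda>y. f y - c)"
    and grad_diff_const: "grad (\<lambda>y. f y - c) = grad f"
    and lap_diff_const: "lap (\<lambda>y. f y - c) = lap f"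
proof -
  have diff: "\<forall>x. f differentiable (at x)"
    using assms by (simp add: C2_def)
  then have "(\<lambda>y. f y - c) differentiable (at x)" for x
    by (simp add: differentiable_diff)
  then show "C2 (\<lambda>y. f y - c)"
    using assms by (simp add: C2_def pderiv_diff_const[OF diff])
  show "grad (\<lambda>y. f y - c) = grad f"
    unfolding grad_def[abs_def] pderiv_diff_const[OF diff] ..
  show "lap (\<lambda>y. f y - c) = lap f"
    unfolding lap_def[abs_def] pderiv_diff_const[OF diff] ..
qed

lemma omega_sets [measurable]: "omega tor \<in> sets lborel"
  by (simp add: omega_def)

lemma borel_measurable_C2: "C2 f \<Longrightarrow> f \<in> borel_measurable borel"
  unfolding C2_def
  by (intro borel_measurable_continuous_onI continuous_at_imp_continuous_on)
     (auto intro: differentiable_imp_continuous_within)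

lemma piU_nonneg: "0 \<le> piU tor U x"
  using set_integral_nonneg_real[of "omega tor" "\<lambda>y. exp (- U y)" lborel]
  by (simp add: piU_def Zc_def)

lemma borel_measurable_piU:
  assumes [measurable]: "U \<in> borel_measurable borel"
  shows "piU tor U \<in> borel_measurable borel"
  unfolding piU_def by measurable

lemma set_integrable_piU:
  "set_integrable lborel (omega tor) (\<lambda>x. exp (- U x)) \<Longrightarrow>
    set_integrable lborel (omega tor) (piU tor U)"
  unfolding piU_def by simp

lemma L2norm_sq: "(L2norm tor U \<phi>)\<^sup>2 = (LINT x:omega tor|lborel. (\<phi> x)\<^sup>2 * piU tor U x)"
  using set_integral_nonneg_real[of "omega tor" "\<lambda>x. (\<phi> x)\<^sup>2 * piU tor U x" lborel]
  by (simp add: L2norm_def piU_nonneg)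

lemma L2norm_nonneg: "0 \<le> L2norm tor U \<phi>"
  by (simp add: L2norm_def set_integral_nonneg_real piU_nonneg)

context
  fixes tor :: bool and U :: "'a::euclidean_space \<Rightarrow> real"
  assumes U_meas [measurable]: "U \<in> borel_measurable borel"
    and U_int: "set_integrable lborel (omega tor) (\<lambda>x. exp (- U x))"
begin

lemma inL2_set_integrable:
  assumes "inL2 tor U \<phi>"
  shows "set_integrable lborel (omega tor) (\<lambda>x. \<phi> x * piU tor U x)"
proof (rule set_integrable_bound)
  have [measurable]: "\<phi> \<in> borel_measurable borel" "piU tor U \<in> borel_measurable borel"
    using assms borel_measurable_piU[OF U_meas] by (simp_all add: inL2_def)
  show "set_integrable lborel (omega tor) (\<lambda>x. (\<phi> x)\<^sup>2 * piU tor U x + piU tor U x)"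
    using assms set_integrable_piU[OF U_int] by (simp add: inL2_def)
  show "set_borel_measurable lborel (omega tor) (\<lambda>x. \<phi> x * piU tor U x)"
    unfolding set_borel_measurable_def by measurable
  have "\<bar>\<phi> x\<bar> * piU tor U x \<le> ((\<phi> x)\<^sup>2 + 1) * piU tor U x" for x
    using sum_squares_ge_zero[of "\<bar>\<phi> x\<bar> - 1/2" 0] piU_nonneg
    by (intro mult_right_mono) (simp_all add: power2_eq_square algebra_simps)
  then show "AE x in lborel. x \<in> omega tor \<longrightarrow>
      norm (\<phi> x * piU tor U x) \<le> norm ((\<phi> x)\<^sup>2 * piU tor U x + piU tor U x)"
    using piU_nonneg[of tor U] by (simp add: abs_mult distrib_right)
qed

lemma inL2_diff_const:
  assumes "inL2 tor U \<phi>"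
  shows "inL2 tor U (\<lambda>x. \<phi> x - c)"
proof -
  have [measurable]: "\<phi> \<in> borel_measurable borel" "piU tor U \<in> borel_measurable borel"
    using assms borel_measurable_piU[OF U_meas] by (simp_all add: inL2_def)
  have "set_integrable lborel (omega tor) (\<lambda>x. (\<phi> x - c)\<^sup>2 * piU tor U x)"
  proof (rule set_integrable_bound)
    show "set_integrable lborel (omega tor) (\<lambda>x. 2 * ((\<phi> x)\<^sup>2 * piU tor U x) + 2 * c\<^sup>2 * piU tor U x)"
      using assms set_integrable_piU[OF U_int] by (simp add: inL2_def)
    show "set_borel_measurable lborel (omega tor) (\<lambda>x. (\<phi> x - c)\<^sup>2 * piU tor U x)"
      unfolding set_borel_measurable_def by measurable
    have "(\<phi> x - c)\<^sup>2 * piU tor U x \<le> (2 * (\<phi> x)\<^sup>2 + 2 * c\<^sup>2) * piU tor U x" for x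
      using sum_squares_ge_zero[of "\<phi> x + c" 0] piU_nonneg
      by (intro mult_right_mono) (simp_all add: power2_eq_square algebra_simps)
    then show "AE x in lborel. x \<in> omega tor \<longrightarrow> norm ((\<phi> x - c)\<^sup>2 * piU tor U x)
        \<le> norm (2 * ((\<phi> x)\<^sup>2 * piU tor U x) + 2 * c\<^sup>2 * piU tor U x)"
      using piU_nonneg[of tor U] by (simp add: abs_mult algebra_simps)
  qed
  then show ?thesis
    using assms by (simp add: inL2_def periodic_def)
qed

lemma is_sol_diff_const:
  assumes q: "is_sol tor U v A q"
  shows "is_sol tor U v A (\<lambda>s x. q s x - c)"
  unfolding is_sol_def
proof (intro conjI allI impI)
  fix t :: real
  assume "0 \<le> t"
  then show "inL2 tor U (\<lambda>x. q t x - c)"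
    and "((\<lambda>s. L2norm tor U (\<lambda>x. q s x - c - (q t x - c))) \<longlongrightarrow> 0) (at t within {0..})"
    using q inL2_diff_const by (simp_all add: is_sol_def)
next
  fix t :: real and x
  assume "0 < t"
  then have C2: "C2 (q t)"
    and q': "((\<lambda>s. q s x) has_real_derivative
          lap (q t) x - grad U x \<bullet> grad (q t) x - A * (v x \<bullet> grad (q t) x)) (at t)"
    using q by (simp_all add: is_sol_def)
  show "C2 (\<lambda>x. q t x - c)"
    using C2 by (rule C2_diff_const)
  show "((\<lambda>s. q s x - c) has_real_derivative lap (\<lambda>x. q t x - c) x
      - grad U x \<bullet> grad (\<lambda>x. q t x - c) x - A * (v x \<bullet> grad (\<lambda>x. q t x - c) x)) (at t)"
    using DERIV_diff[OF q' DERIV_const[of c]] by (simp add: C2 grad_diff_const lap_diff_const)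
qed

lemma entropy_le_L2norm_sq:
  assumes "(\<lambda>x. f x - 1) \<in> Xsp tor U"
  shows "entropy tor U f \<le> 2 * (L2norm tor U (\<lambda>x. f x - 1))\<^sup>2"
  using assms inL2_set_integrable piU_nonneg
  by (auto simp: Xsp_def inL2_def entropy_def L2norm_sq intro!: set_integral_mult_ln_le_sq)

lemma L2norm_sq_le_entropy:
  assumes X: "(\<lambda>x. f x - 1) \<in> Xsp tor U"
    and c1: "0 < c1" and bnd: "\<forall>x\<in>omega tor. c1 \<le> f x \<and> f x \<le> c2"
  shows "(L2norm tor U (\<lambda>x. f x - 1))\<^sup>2 / (2 * max c2 1) \<le> entropy tor U f"
proof -
  have [measurable]: "(\<lambda>x. f x - 1) \<in> borel_measurable borel"
    using X by (simp add: Xsp_def inL2_def)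
  then have [measurable]: "f \<in> borel_measurable borel"
    using borel_measurable_add[of "\<lambda>x. f x - 1" borel "\<lambda>_. 1"] by simp
  have [measurable]: "piU tor U \<in> borel_measurable borel"
    using borel_measurable_piU[OF U_meas] .
  define K where "K = \<bar>c2\<bar> * (\<bar>ln c1\<bar> + \<bar>ln c2\<bar>)"
  have "set_integrable lborel (omega tor) (\<lambda>x. f x * ln (f x) * piU tor U x)"
  proof (rule set_integrable_bound)
    show "set_integrable lborel (omega tor) (\<lambda>x. K * piU tor U x)"
      using set_integrable_piU[OF U_int] by simp
    show "set_borel_measurable lborel (omega tor) (\<lambda>x. f x * ln (f x) * piU tor U x)"
      unfolding set_borel_measurable_def by measurable
    have "\<bar>f x * ln (f x)\<bar> * piU tor U x \<le> K * piU tor U x" if "x \<in> omega tor" for x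
    proof -
      have "c1 \<le> f x" "f x \<le> c2"
        using bnd that by auto
      then have "\<bar>ln (f x)\<bar> \<le> \<bar>ln c1\<bar> + \<bar>ln c2\<bar>"
        using c1 ln_le_cancel_iff[of c1 "f x"] ln_le_cancel_iff[of "f x" c2] by linarith
      then have "\<bar>f x * ln (f x)\<bar> \<le> K"
        unfolding K_def abs_mult using \<open>c1 \<le> f x\<close> \<open>f x \<le> c2\<close> c1 by (intro mult_mono) auto
      then show ?thesis
        using piU_nonneg by (rule mult_right_mono)
    qed
    moreover have "0 \<le> K"
      by (simp add: K_def)
    ultimately show "AE x in lborel. x \<in> omega tor \<longrightarrow>
        norm (f x * ln (f x) * piU tor U x) \<le> norm (K * piU tor U x)"
      using piU_nonneg[of tor U] by (simp add: abs_mult)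
  qed
  then show ?thesis
    using X c1 bnd inL2_set_integrable piU_nonneg
    by (auto simp: Xsp_def inL2_def entropy_def L2norm_sq intro!: set_integral_mult_ln_ge_sq)
qed

lemma entropy_contraction:
  assumes X: "(\<lambda>x. q0 x - 1) \<in> Xsp tor U" "(\<lambda>x. q x - 1) \<in> Xsp tor U"
    and c1: "0 < c1" and bnd: "\<forall>x\<in>omega tor. c1 \<le> q0 x \<and> q0 x \<le> c2"
    and contr: "L2norm tor U (\<lambda>x. q x - 1) \<le> \<delta> * L2norm tor U (\<lambda>x. q0 x - 1)"
    and \<delta>: "0 \<le> \<delta>" "4 * max c2 1 * \<delta>\<^sup>2 \<le> \<epsilon>"
  shows "entropy tor U q \<le> \<epsilon> * entropy tor U q0"
proof -
  have "0 \<le> 4 * max c2 1 * \<delta>\<^sup>2"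
    by simp
  then have "0 \<le> \<epsilon>"
    using \<delta>(2) by linarith
  define M where "M = max c2 1"
  define N0 where "N0 = L2norm tor U (\<lambda>x. q0 x - 1)"
  have "entropy tor U q \<le> 2 * (L2norm tor U (\<lambda>x. q x - 1))\<^sup>2"
    using entropy_le_L2norm_sq[OF X(2)] .
  also have "\<dots> \<le> 2 * (\<delta> * N0)\<^sup>2"
    using power_mono[OF contr L2norm_nonneg] by (simp add: N0_def)
  also have "\<dots> = 4 * M * \<delta>\<^sup>2 * (N0\<^sup>2 / (2 * M))"
    by (simp add: M_def field_simps power2_eq_square)
  also have "\<dots> \<le> \<epsilon> * (N0\<^sup>2 / (2 * M))"
    using \<delta> by (intro mult_right_mono) (simp_all add: M_def)
  also have "\<dots> \<le> \<epsilon> * entropy tor U q0"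
    using L2norm_sq_le_entropy[OF X(1) c1 bnd] \<open>0 \<le> \<epsilon>\<close>
    by (intro mult_left_mono) (simp_all add: M_def N0_def)
  finally show ?thesis .
qed

end

lemma relax_enh_contraction:
  assumes "relax_enh tor U v Y" "0 < \<tau>" "0 < \<delta>"
  obtains A1 where "0 < A1"
    "\<And>A q. A1 \<le> A \<Longrightarrow> is_sol tor U v A q \<Longrightarrow> q 0 \<in> Y \<Longrightarrow>
       L2norm tor U (q \<tau>) \<le> \<delta> * L2norm tor U (q 0)"
proof -
  obtain A1 where "0 < A1" and A1: "\<forall>A\<ge>A1. \<exists>c<\<delta>. \<forall>q. is_sol tor U v A q \<and> q 0 \<in> Y
      \<longrightarrow> L2norm tor U (q \<tau>) \<le> c * L2norm tor U (q 0)"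
    using assms unfolding relax_enh_def by blast
  have "L2norm tor U (q \<tau>) \<le> \<delta> * L2norm tor U (q 0)"
    if sol: "A1 \<le> A" "is_sol tor U v A q" "q 0 \<in> Y" for A q
  proof -
    obtain c where "c < \<delta>" "L2norm tor U (q \<tau>) \<le> c * L2norm tor U (q 0)"
      using A1 sol by blast
    then show ?thesis
      using mult_right_mono[of c \<delta> "L2norm tor U (q 0)"] L2norm_nonneg by fastforce
  qed
  with \<open>0 < A1\<close> show thesis
    using that by blast
qed

(* Besides relaxation enhancement and the invariance of Y, only the measurability of U is
   used: the other hypotheses on U and v serve in the paper to construct the solutions, over
   which the statement quantifies, and the normalisation of q0 follows from q0 - 1 : Y. *)

theorem mainTheorem1:
  fixes tor :: bool and U :: "'a::euclidean_space \<Rightarrow> real" and v :: "'a \<Rightarrow> 'a"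
    and Y :: "('a \<Rightarrow> real) set" and q0 :: "'a \<Rightarrow> real" and c1 c2 :: real
  assumes U_C2: "C2 U"
    and U_per: "tor \<longrightarrow> periodic U"
    and U_int: "set_integrable lborel (omega tor) (\<lambda>x. exp (- U x))"
    and U_conf: "\<not> tor \<longrightarrow>
        filterlim (\<lambda>x. (norm (grad U x))\<^sup>2 / 2 - lap U x) at_top at_infinity"
    and v_C1: "C1_field v"
    and v_per: "tor \<longrightarrow> periodic v"
    and v_flow: "\<forall>x. divg (\<lambda>y. exp (- U y) *\<^sub>R v y) x = 0"
    and Y_sub: "closed_subspace tor U Y"
    and Y_inv: "\<forall>A\<ge>0. \<forall>q. is_sol tor U v A q \<and> q 0 \<in> Y \<longrightarrow> (\<forall>t\<ge>0. q t \<in> Y)"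
    and v_RE: "relax_enh tor U v Y"
    and q0_dens: "(LINT x:omega tor|lborel. q0 x * piU tor U x) = 1"
    and c1_pos: "0 < c1"
    and q0_bnd: "\<forall>x. c1 \<le> q0 x \<and> q0 x \<le> c2"
    and q0_Y: "(\<lambda>x. q0 x - 1) \<in> Y"
  shows "\<forall>B>0. \<forall>t>0. \<exists>A0. \<forall>A>A0. \<forall>q. is_sol tor U v A q \<and> q 0 = q0 \<longrightarrow>
           entropy tor U (q t) \<le> entropy tor U q0 * exp (- B * t)"
proof (intro allI impI)
  fix B t :: real
  assume "0 < B" "0 < t"
  define \<delta> where "\<delta> = sqrt (exp (- B * t) / (4 * max c2 1))"
  have \<delta>: "0 < \<delta>" "4 * max c2 1 * \<delta>\<^sup>2 = exp (- B * t)"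
    by (simp_all add: \<delta>_def)
  obtain A1 where "0 < A1" and contr: "\<And>A q. A1 \<le> A \<Longrightarrow> is_sol tor U v A q \<Longrightarrow> q 0 \<in> Y \<Longrightarrow>
      L2norm tor U (q t) \<le> \<delta> * L2norm tor U (q 0)"
    using relax_enh_contraction[OF v_RE \<open>0 < t\<close> \<delta>(1)] by blast
  have U_meas: "U \<in> borel_measurable borel"
    using U_C2 by (rule borel_measurable_C2)
  have Y_X: "Y \<subseteq> Xsp tor U"
    using Y_sub by (simp add: closed_subspace_def)
  have "entropy tor U (q t) \<le> entropy tor U q0 * exp (- B * t)"
    if "A1 < A" and q: "is_sol tor U v A q" "q 0 = q0" for A q
  proof -
    let ?r = "\<lambda>s x. q s x - 1"
    have r: "is_sol tor U v A ?r"
      using is_sol_diff_const[OF U_meas U_int q(1)] .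
    have "?r t \<in> Y"
      using Y_inv[rule_format, of A ?r t] r q0_Y \<open>0 < A1\<close> \<open>A1 < A\<close> \<open>0 < t\<close> q(2) by simp
    moreover have "L2norm tor U (?r t) \<le> \<delta> * L2norm tor U (\<lambda>x. q0 x - 1)"
      using contr[OF _ r] \<open>A1 < A\<close> q0_Y q(2) by simp
    ultimately have "entropy tor U (q t) \<le> exp (- B * t) * entropy tor U q0"
      using q0_Y Y_X q0_bnd \<delta> by (intro entropy_contraction[OF U_meas U_int _ _ c1_pos]) auto
    then show ?thesis
      by (simp add: mult.commute)
  qed
  then show "\<exists>A0. \<forall>A>A0. \<forall>q. is_sol tor U v A q \<and> q 0 = q0 \<longrightarrow>
      entropy tor U (q t) \<le> entropy tor U q0 * exp (- B * t)"
    by blast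
qed

end
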